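(* Let $B_n$ be the number of bidirectional ballot sequences of length $n$. Then $B_n=\Theta(2^n/n)$ as $n\to\infty$.
   Context: A 0-1 sequence of length $n$ is a bidirectional ballot sequence if every nonempty prefix and every nonempty suffix of it contains strictly more 1's than 0's. $f=\Theta(g)$ means there are positive constants $c,C$ with $cg(n)\le f(n)\le Cg(n)$ for all sufficiently large $n$. *)

theory Defs
  imports Complex_Main
begin

definition ones :: "bool list \<Rightarrow> nat" where
  "ones xs = length (filter (\<lambda>b. b) xs)"

definition zeros :: "bool list \<Rightarrow> nat" where
  "zeros xs = length (filter (\<lambda>b. \<not> b) xs)"

definition bidir_ballot :: "bool list \<Rightarrow> bool" where
  "bidir_ballot xs \<longleftrightarrow>
     (\<forall>k. 1 \<le> k \<and> k \<le> length xs \<longrightarrow> zeros (take k xs) < ones (take k xs)) \<and>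
     (\<forall>k. k < length xs \<longrightarrow> zeros (drop k xs) < ones (drop k xs))"

definition B :: "nat \<Rightarrow> nat" where
  "B n = card {xs :: bool list. length xs = n \<and> bidir_ballot xs}"

end

theory Submission
  imports Defs
begin

text \<open>Let the height of a 0-1 word be its number of 1's minus its number of 0's. Cutting a
  bidirectional ballot sequence of length a + b after a letters leaves a ballot sequence (all
  nonempty prefixes of positive height) of length a and the reversal of one of length b. By the
  reflection principle there are binom(a - 1, (a - 1) div 2), i.e. about 2^a / sqrt a, ballot
  sequences of length a, so B_n is at most about 2^n / n.

  Conversely, if x and y are ballot sequences of length a ending at height at least T, none of whose
  prefixes rises T above the final height, then x followed by the reversal of y is a bidirectional
  ballot sequence. Reflecting after the last visit of the level height x + T shows that the ballot
  sequences violating the second condition are at most as many as those ending at height at least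
  2 T + 1. For T about sqrt a the difference of the two resulting binomial coefficients is still a
  constant fraction of the central one, so B_(2a) is at least a constant times 2^(2a) / a.\<close>

definition height :: "bool list \<Rightarrow> int" where
  "height xs = int (ones xs) - int (zeros xs)"

lemma height_Nil [simp]: "height [] = 0"
  by (simp add: height_def ones_def zeros_def)

lemma height_Cons [simp]: "height (b # xs) = (if b then 1 else -1) + height xs"
  by (simp add: height_def ones_def zeros_def)

lemma height_append [simp]: "height (xs @ ys) = height xs + height ys"
  by (induction xs) auto

lemma height_rev [simp]: "height (rev xs) = height xs"
  by (induction xs) auto

lemma height_map_Not [simp]: "height (map Not xs) = - height xs"
  by (induction xs) auto

lemma height_drop: "height (drop k xs) = height xs - height (take k xs)"
  using height_append[of "take k xs" "drop k xs"] by simp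

lemma height_take_Suc_step: "\<bar>height (take (Suc k) xs) - height (take k xs)\<bar> \<le> 1"
  by (cases "k < length xs") (simp_all add: take_Suc_conv_app_nth)

lemma bidir_ballot_iff_height:
  "bidir_ballot xs \<longleftrightarrow>
     (\<forall>k. 1 \<le> k \<and> k \<le> length xs \<longrightarrow> 0 < height (take k xs)) \<and>
     (\<forall>k. k < length xs \<longrightarrow> 0 < height (drop k xs))"
  by (simp add: bidir_ballot_def height_def)

lemma finite_bool_lists_length_eq: "finite {xs :: bool list. length xs = n}"
  using finite_lists_length_eq[of "UNIV :: bool set" n] by simp

lemma unit_step_ivt:
  fixes f :: "nat \<Rightarrow> int"
  assumes step: "\<And>k. \<bar>f (Suc k) - f k\<bar> \<le> 1" and "i \<le> j" "f i \<le> v" "v \<le> f j"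
  shows "\<exists>k. i \<le> k \<and> k \<le> j \<and> f k = v"
  using assms(2-4)
proof (induction j)
  case 0
  then show ?case by auto
next
  case (Suc j)
  show ?case
  proof (cases "i \<le> j \<and> v \<le> f j")
    case True
    then show ?thesis using Suc.IH Suc.prems by (auto intro: le_SucI)
  next
    case False
    have "f (Suc j) = v"
    proof (cases "i \<le> j")
      case True
      with False have "f j < v" by auto
      with step[of j] Suc.prems show ?thesis by auto
    next
      case False
      with Suc.prems show ?thesis by (auto simp: le_Suc_eq)
    qed
    then show ?thesis using Suc.prems by auto
  qed
qed

lemma unit_step_ivt_down:
  fixes f :: "nat \<Rightarrow> int"
  assumes step: "\<And>k. \<bar>f (Suc k) - f k\<bar> \<le> 1" and "i \<le> j" "f j \<le> v" "v \<le> f i"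
  shows "\<exists>k. i \<le> k \<and> k \<le> j \<and> f k = v"
  using unit_step_ivt[of "\<lambda>k. - f k" i j "- v"] assms by (auto simp: abs_minus_commute)

section \<open>Counting paths that stay nonnegative\<close>

definition binom_prefix_sum :: "nat \<Rightarrow> int \<Rightarrow> int" where
  "binom_prefix_sum L t = (\<Sum>k\<le>L. if int k \<le> t then int (L choose k) else 0)"

lemma binom_prefix_sum_0 [simp]: "binom_prefix_sum 0 t = (if 0 \<le> t then 1 else 0)"
  by (simp add: binom_prefix_sum_def)

lemma binom_prefix_sum_Suc:
  "binom_prefix_sum (Suc L) t = binom_prefix_sum L t + binom_prefix_sum L (t - 1)"
proof -
  let ?shifted = "\<lambda>j. if int (Suc j) \<le> t then int (L choose Suc j) else 0"
  have shift: "binom_prefix_sum L t = (if 0 \<le> t then 1 else 0) + (\<Sum>j\<le>L. ?shifted j)"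
  proof -
    have "binom_prefix_sum L t = (\<Sum>k\<le>Suc L. if int k \<le> t then int (L choose k) else 0)"
      unfolding binom_prefix_sum_def by simp
    also have "\<dots> = (if 0 \<le> t then 1 else 0) + (\<Sum>j\<le>L. ?shifted j)"
      by (subst sum.atMost_Suc_shift) simp
    finally show ?thesis .
  qed
  have "binom_prefix_sum (Suc L) t = (if 0 \<le> t then 1 else 0) +
      (\<Sum>j\<le>L. if int (Suc j) \<le> t then int (Suc L choose Suc j) else 0)"
    unfolding binom_prefix_sum_def by (subst sum.atMost_Suc_shift) simp
  also have "(\<Sum>j\<le>L. if int (Suc j) \<le> t then int (Suc L choose Suc j) else 0) =
      binom_prefix_sum L (t - 1) + (\<Sum>j\<le>L. ?shifted j)"
    unfolding binom_prefix_sum_def by (subst sum.distrib[symmetric]) (rule sum.cong, auto)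
  finally show ?thesis using shift by simp
qed

lemma binom_prefix_sum_diff:
  assumes "0 \<le> t"
  shows "binom_prefix_sum L t - binom_prefix_sum L (t - 1) =
    (if t \<le> int L then int (L choose nat t) else 0)"
proof -
  have "binom_prefix_sum L t - binom_prefix_sum L (t - 1) =
      (\<Sum>k\<le>L. if k = nat t then int (L choose k) else 0)"
    unfolding binom_prefix_sum_def sum_subtractf[symmetric]
    by (rule sum.cong) (use assms in auto)
  also have "\<dots> = (if t \<le> int L then int (L choose nat t) else 0)"
    using assms by (subst sum.delta) auto
  finally show ?thesis .
qed

text \<open>Reflection principle: among the L-step paths starting at height h, those ending at height
  at least s and those ending at height at most -s-2 are counted by their number of down-steps,
  and the difference counts the paths that never go below zero.\<close>

definition nonneg_path_count :: "nat \<Rightarrow> int \<Rightarrow> int \<Rightarrow> int" where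
  "nonneg_path_count L h s =
     binom_prefix_sum L ((int L + h - s) div 2) - binom_prefix_sum L ((int L - h - s - 2) div 2)"

lemma nonneg_path_count_Suc:
  "nonneg_path_count (Suc L) h s = nonneg_path_count L (h + 1) s + nonneg_path_count L (h - 1) s"
proof -
  define X where "X = (int (Suc L) + h - s) div 2"
  define Y where "Y = (int (Suc L) - h - s - 2) div 2"
  have "X = (int L + (h + 1) - s) div 2" "X - 1 = (int L + (h - 1) - s) div 2"
    "Y = (int L - (h - 1) - s - 2) div 2" "Y - 1 = (int L - (h + 1) - s - 2) div 2"
    unfolding X_def Y_def by presburger+
  then show ?thesis
    unfolding nonneg_path_count_def binom_prefix_sum_Suc X_def[symmetric] Y_def[symmetric]
    by simp
qed

lemma nonneg_path_count_minus_one [simp]: "nonneg_path_count L (-1) s = 0"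
  unfolding nonneg_path_count_def by (simp add: algebra_simps)

definition nonneg_paths :: "nat \<Rightarrow> int \<Rightarrow> int \<Rightarrow> bool list set" where
  "nonneg_paths L h s =
     {xs. length xs = L \<and> (\<forall>k. 0 \<le> h + height (take k xs)) \<and> s \<le> h + height xs}"

lemma finite_nonneg_paths: "finite (nonneg_paths L h s)"
  by (rule finite_subset[OF _ finite_bool_lists_length_eq[of L]]) (auto simp: nonneg_paths_def)

lemma nonneg_paths_negative: "h < 0 \<Longrightarrow> nonneg_paths L h s = {}"
  unfolding nonneg_paths_def by (force dest: spec[of _ 0])

lemma nonneg_paths_0: "0 \<le> h \<Longrightarrow> nonneg_paths 0 h s = (if s \<le> h then {[]} else {})"
  unfolding nonneg_paths_def by auto

lemma nonneg_paths_Suc: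
  assumes "0 \<le> h"
  shows "nonneg_paths (Suc L) h s =
    Cons True ` nonneg_paths L (h + 1) s \<union> Cons False ` nonneg_paths L (h - 1) s"
proof (rule set_eqI)
  fix xs
  show "xs \<in> nonneg_paths (Suc L) h s \<longleftrightarrow>
    xs \<in> Cons True ` nonneg_paths L (h + 1) s \<union> Cons False ` nonneg_paths L (h - 1) s"
  proof (cases xs)
    case Nil
    then show ?thesis by (auto simp: nonneg_paths_def)
  next
    case (Cons b ys)
    have "(\<forall>k. 0 \<le> h + height (take k (b # ys))) \<longleftrightarrow>
        (\<forall>k. 0 \<le> h + (if b then 1 else -1) + height (take k ys))"
    proof
      assume "\<forall>k. 0 \<le> h + height (take k (b # ys))"
      then show "\<forall>k. 0 \<le> h + (if b then 1 else -1) + height (take k ys)"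
        by (metis add.assoc height_Cons take_Suc_Cons)
    next
      assume prefixes: "\<forall>k. 0 \<le> h + (if b then 1 else -1) + height (take k ys)"
      show "\<forall>k. 0 \<le> h + height (take k (b # ys))"
      proof
        fix k
        show "0 \<le> h + height (take k (b # ys))"
          using prefixes[rule_format, of "k - 1"] assms by (cases k) auto
      qed
    qed
    then show ?thesis
      unfolding Cons nonneg_paths_def by (cases b) (auto simp: algebra_simps)
  qed
qed

lemma card_nonneg_paths:
  "-1 \<le> h \<Longrightarrow> 0 \<le> s \<Longrightarrow> int (card (nonneg_paths L h s)) = nonneg_path_count L h s"
proof (induction L arbitrary: h)
  case 0
  show ?case
  proof (cases "h = -1")
    case False
    with 0 have "0 \<le> h" "(- h - s - 2) div 2 < 0" by auto
    then show ?thesis using 0 by (simp add: nonneg_paths_0 nonneg_path_count_def)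
  qed (simp add: nonneg_paths_negative)
next
  case (Suc L)
  show ?case
  proof (cases "h = -1")
    case False
    with Suc.prems have h: "0 \<le> h" by simp
    have "card (nonneg_paths (Suc L) h s) =
        card (nonneg_paths L (h + 1) s) + card (nonneg_paths L (h - 1) s)"
      unfolding nonneg_paths_Suc[OF h]
      by (subst card_Un_disjoint) (auto simp: finite_nonneg_paths card_image)
    then show ?thesis
      using Suc.IH[of "h + 1"] Suc.IH[of "h - 1"] Suc.prems h nonneg_path_count_Suc by simp
  qed (simp add: nonneg_paths_negative)
qed

definition ballot_seqs :: "nat \<Rightarrow> bool list set" where
  "ballot_seqs n = {xs. length xs = n \<and> (\<forall>k. 1 \<le> k \<longrightarrow> k \<le> n \<longrightarrow> 0 < height (take k xs))}"

definition ballot_seqs_ge :: "nat \<Rightarrow> int \<Rightarrow> bool list set" where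
  "ballot_seqs_ge n s = {xs \<in> ballot_seqs n. s \<le> height xs}"

lemma finite_ballot_seqs: "finite (ballot_seqs n)"
  by (rule finite_subset[OF _ finite_bool_lists_length_eq[of n]]) (auto simp: ballot_seqs_def)

lemma finite_ballot_seqs_ge: "finite (ballot_seqs_ge n s)"
  using finite_ballot_seqs by (simp add: ballot_seqs_ge_def)

lemma height_ballot_seq: "xs \<in> ballot_seqs (Suc m) \<Longrightarrow> 1 \<le> height xs"
  unfolding ballot_seqs_def by (auto dest: spec[of _ "Suc m"])

lemma ballot_seqs_ge_Suc:
  "ballot_seqs_ge (Suc m) s = Cons True ` nonneg_paths m 0 (s - 1)"
proof (rule set_eqI)
  fix xs
  show "xs \<in> ballot_seqs_ge (Suc m) s \<longleftrightarrow> xs \<in> Cons True ` nonneg_paths m 0 (s - 1)"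
  proof
    assume xs: "xs \<in> ballot_seqs_ge (Suc m) s"
    then obtain b ys where xs_eq: "xs = b # ys" and len: "length ys = m"
      by (cases xs) (auto simp: ballot_seqs_ge_def ballot_seqs_def)
    have pos: "\<And>k. 1 \<le> k \<Longrightarrow> k \<le> Suc m \<Longrightarrow> 0 < height (take k xs)"
      using xs by (auto simp: ballot_seqs_ge_def ballot_seqs_def)
    have b using pos[of 1] xs_eq by (cases b) auto
    have "0 \<le> height (take j ys)" for j
      using pos[of "Suc (min j m)"] xs_eq \<open>b\<close> len by (cases "j \<le> m") auto
    moreover have "s - 1 \<le> height ys"
      using xs xs_eq \<open>b\<close> by (simp add: ballot_seqs_ge_def)
    ultimately show "xs \<in> Cons True ` nonneg_paths m 0 (s - 1)"
      using xs_eq \<open>b\<close> len by (auto simp: nonneg_paths_def)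
  next
    assume "xs \<in> Cons True ` nonneg_paths m 0 (s - 1)"
    then obtain ys where xs_eq: "xs = True # ys" and ys: "ys \<in> nonneg_paths m 0 (s - 1)"
      by auto
    have "0 < height (take k xs)" if "1 \<le> k" for k
      using ys that xs_eq by (cases k) (auto simp: nonneg_paths_def dest: spec[of _ "k - 1"])
    then show "xs \<in> ballot_seqs_ge (Suc m) s"
      using ys xs_eq by (auto simp: ballot_seqs_ge_def ballot_seqs_def nonneg_paths_def)
  qed
qed

lemma card_ballot_seqs_ge:
  assumes "1 \<le> s" "s \<le> m + 1"
  shows "card (ballot_seqs_ge (Suc m) (int s)) = m choose ((m + 1 - s) div 2)"
proof -
  define t where "t = (int m + 1 - int s) div 2"
  have t: "0 \<le> t" "t \<le> int m" "nat t = (m + 1 - s) div 2"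
    using assms unfolding t_def by (simp_all add: of_nat_diff zdiv_int[symmetric] nat_div_distrib)
  have "int (card (ballot_seqs_ge (Suc m) (int s))) = int (card (nonneg_paths m 0 (int s - 1)))"
    unfolding ballot_seqs_ge_Suc by (simp add: card_image)
  also have "\<dots> = nonneg_path_count m 0 (int s - 1)"
    using assms by (intro card_nonneg_paths) auto
  also have "\<dots> = binom_prefix_sum m t - binom_prefix_sum m (t - 1)"
  proof -
    have "(int m + 0 - (int s - 1)) div 2 = t" "(int m - 0 - (int s - 1) - 2) div 2 = t - 1"
      unfolding t_def by presburger+
    then show ?thesis unfolding nonneg_path_count_def by simp
  qed
  also have "\<dots> = int (m choose ((m + 1 - s) div 2))"
    using t by (simp add: binom_prefix_sum_diff)
  finally show ?thesis by simp
qed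

lemma card_ballot_seqs: "card (ballot_seqs (Suc m)) = m choose (m div 2)"
proof -
  have "ballot_seqs (Suc m) = ballot_seqs_ge (Suc m) 1"
    using height_ballot_seq by (auto simp: ballot_seqs_ge_def)
  then show ?thesis using card_ballot_seqs_ge[of 1 m] by simp
qed

lemma finite_bidir_ballot: "finite {xs :: bool list. length xs = n \<and> bidir_ballot xs}"
  by (rule finite_subset[OF _ finite_bool_lists_length_eq[of n]]) auto

lemma bidir_ballot_split:
  assumes "bidir_ballot xs" "length xs = a + b"
  shows "take a xs \<in> ballot_seqs a" "rev (drop a xs) \<in> ballot_seqs b"
proof -
  have prefix: "\<And>k. 1 \<le> k \<Longrightarrow> k \<le> a + b \<Longrightarrow> 0 < height (take k xs)"
    and suffix: "\<And>k. k < a + b \<Longrightarrow> 0 < height (drop k xs)"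
    using assms by (auto simp: bidir_ballot_iff_height)
  show "take a xs \<in> ballot_seqs a"
    using prefix assms(2) by (auto simp: ballot_seqs_def min_def)
  have "take k (rev (drop a xs)) = rev (drop (a + b - k) xs)" if "k \<le> b" for k
    using assms(2) that by (simp add: take_rev add.commute)
  then show "rev (drop a xs) \<in> ballot_seqs b"
    using suffix assms(2) by (auto simp: ballot_seqs_def)
qed

lemma B_le_card_ballot_seqs_mult: "B (a + b) \<le> card (ballot_seqs a) * card (ballot_seqs b)"
proof -
  let ?split = "\<lambda>xs :: bool list. (take a xs, rev (drop a xs))"
  have "inj ?split"
    by (rule injI) (metis append_take_drop_id prod.inject rev_rev_ident)
  moreover have "?split ` {xs. length xs = a + b \<and> bidir_ballot xs} \<subseteq> ballot_seqs a \<times> ballot_seqs b"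
    using bidir_ballot_split by blast
  ultimately have "B (a + b) \<le> card (ballot_seqs a \<times> ballot_seqs b)"
    unfolding B_def by (intro card_inj_on_le) (auto intro: inj_on_subset finite_ballot_seqs)
  then show ?thesis by (simp add: card_cartesian_product)
qed

lemma bidir_ballot_snoc_True: "bidir_ballot xs \<Longrightarrow> bidir_ballot (xs @ [True])"
proof -
  assume xs: "bidir_ballot xs"
  then have "0 \<le> height xs"
    by (cases "xs = []") (auto simp: bidir_ballot_iff_height dest: spec[of _ "length xs"])
  with xs show ?thesis
    by (auto simp: bidir_ballot_iff_height le_Suc_eq less_Suc_eq)
qed

lemma B_mono: "m \<le> n \<Longrightarrow> B m \<le> B n"
proof (rule lift_Suc_mono_le[of B])
  fix n
  have "inj (\<lambda>xs :: bool list. xs @ [True])"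
    by (rule injI) simp
  moreover have "(\<lambda>xs. xs @ [True]) ` {xs. length xs = n \<and> bidir_ballot xs} \<subseteq>
      {xs. length xs = Suc n \<and> bidir_ballot xs}"
    using bidir_ballot_snoc_True by auto
  ultimately show "B n \<le> B (Suc n)"
    unfolding B_def by (intro card_inj_on_le) (auto intro: inj_on_subset finite_bidir_ballot)
qed

section \<open>Gluing two ballot sequences\<close>

definition tame_ballot_seqs :: "nat \<Rightarrow> int \<Rightarrow> bool list set" where
  "tame_ballot_seqs n T = {xs \<in> ballot_seqs_ge n T. \<forall>k. height (take k xs) < height xs + T}"

lemma bidir_ballot_append_rev:
  assumes x: "x \<in> tame_ballot_seqs a T" and y: "y \<in> tame_ballot_seqs a T"
  shows "bidir_ballot (x @ rev y)"
proof -
  have len: "length x = a" "length y = a"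
    and pos_x: "\<And>k. 1 \<le> k \<Longrightarrow> k \<le> a \<Longrightarrow> 0 < height (take k x)"
    and pos_y: "\<And>k. 1 \<le> k \<Longrightarrow> k \<le> a \<Longrightarrow> 0 < height (take k y)"
    and high: "T \<le> height x" "T \<le> height y"
    and tame_x: "\<And>k. height (take k x) < height x + T"
    and tame_y: "\<And>k. height (take k y) < height y + T"
    using x y by (auto simp: tame_ballot_seqs_def ballot_seqs_ge_def ballot_seqs_def)
  have "0 < height (take k (x @ rev y))" if "1 \<le> k" "k \<le> a + a" for k
  proof (cases "k \<le> a")
    case False
    then have "take k (x @ rev y) = x @ rev (drop (a + a - k) y)"
      using len by (simp add: take_rev)
    then show ?thesis using tame_y[of "a + a - k"] high(1) by (simp add: height_drop)
  qed (use pos_x that len in simp)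
  moreover have "0 < height (drop k (x @ rev y))" if "k < a + a" for k
  proof (cases "k < a")
    case True
    then show ?thesis using tame_x[of k] high(2) len by (simp add: height_drop)
  next
    case False
    then have "drop k (x @ rev y) = rev (take (a + a - k) y)"
      using len by (simp add: drop_rev)
    then show ?thesis using pos_y[of "a + a - k"] that False by simp
  qed
  ultimately show ?thesis using len by (simp add: bidir_ballot_iff_height)
qed

lemma card_tame_ballot_seqs_squared: "card (tame_ballot_seqs a T) ^ 2 \<le> B (a + a)"
proof -
  let ?glue = "\<lambda>(x, y). x @ rev y"
  have len: "\<And>x. x \<in> tame_ballot_seqs a T \<Longrightarrow> length x = a"
    by (simp add: tame_ballot_seqs_def ballot_seqs_ge_def ballot_seqs_def)
  have "inj_on ?glue (tame_ballot_seqs a T \<times> tame_ballot_seqs a T)"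
  proof (rule inj_onI, clarify)
    fix x y x' y'
    assume "x \<in> tame_ballot_seqs a T" "x' \<in> tame_ballot_seqs a T" "x @ rev y = x' @ rev y'"
    then show "x = x' \<and> y = y'"
      using len append_eq_append_conv[of x x' "rev y" "rev y'"] by simp
  qed
  moreover have "?glue ` (tame_ballot_seqs a T \<times> tame_ballot_seqs a T) \<subseteq>
      {xs. length xs = a + a \<and> bidir_ballot xs}"
    using bidir_ballot_append_rev len by auto
  ultimately have "card (tame_ballot_seqs a T \<times> tame_ballot_seqs a T) \<le> B (a + a)"
    unfolding B_def by (intro card_inj_on_le finite_bidir_ballot)
  then show ?thesis by (simp add: card_cartesian_product power2_eq_square)
qed

section \<open>Reflection after the last visit of a level\<close>

definition last_visit :: "int \<Rightarrow> bool list \<Rightarrow> nat" where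
  "last_visit v xs = (GREATEST j. j \<le> length xs \<and> height (take j xs) = v)"

lemma last_visit:
  assumes "0 \<le> v" "height xs \<le> v" "v \<le> height (take k xs)"
  shows "last_visit v xs \<le> length xs" "height (take (last_visit v xs) xs) = v"
    and "\<And>j. last_visit v xs < j \<Longrightarrow> j \<le> length xs \<Longrightarrow> height (take j xs) < v"
proof -
  let ?visit = "\<lambda>j. j \<le> length xs \<and> height (take j xs) = v"
  note step = height_take_Suc_step[of _ xs]
  have "v \<le> height (take (min k (length xs)) xs)"
    using assms(3) by (cases "k \<le> length xs") auto
  then obtain j where "?visit j"
    using unit_step_ivt[of "\<lambda>j. height (take j xs)", OF step, of 0 "min k (length xs)" v] assms(1)
    by auto
  then show le: "last_visit v xs \<le> length xs" and at: "height (take (last_visit v xs) xs) = v"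
    using GreatestI_nat[of ?visit j "length xs"] unfolding last_visit_def by auto
  fix j
  assume j: "last_visit v xs < j" "j \<le> length xs"
  show "height (take j xs) < v"
  proof (rule ccontr)
    assume "\<not> height (take j xs) < v"
    then obtain i where "j \<le> i" "?visit i"
      using unit_step_ivt_down[of "\<lambda>j. height (take j xs)", OF step, of j "length xs" v] j assms(2)
      by auto
    then have "i \<le> last_visit v xs"
      unfolding last_visit_def by (intro Greatest_le_nat[of ?visit i "length xs"]) auto
    with \<open>j \<le> i\<close> j show False by simp
  qed
qed

definition reflect_after :: "nat \<Rightarrow> bool list \<Rightarrow> bool list" where
  "reflect_after j xs = take j xs @ map Not (drop j xs)"

lemma length_reflect_after [simp]: "length (reflect_after j xs) = length xs"
  by (simp add: reflect_after_def)

lemma take_reflect_after: "i \<le> j \<Longrightarrow> take i (reflect_after j xs) = take i xs"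
  by (simp add: reflect_after_def min_def)

lemma drop_reflect_after: "j \<le> length xs \<Longrightarrow> drop j (reflect_after j xs) = map Not (drop j xs)"
  by (simp add: reflect_after_def)

lemma height_take_reflect_after:
  assumes "j \<le> i"
  shows "height (take i (reflect_after j xs)) = 2 * height (take j xs) - height (take i xs)"
proof -
  have "take i xs = take j xs @ take (i - j) (drop j xs)"
    using assms take_add[of j "i - j" xs] by simp
  moreover have "take i (reflect_after j xs) = take j xs @ map Not (take (i - j) (drop j xs))"
    using assms by (cases "j \<le> length xs") (simp_all add: reflect_after_def take_map)
  ultimately show ?thesis by simp
qed

definition reflect_at_last_visit :: "int \<Rightarrow> bool list \<Rightarrow> bool list" where
  "reflect_at_last_visit v xs = reflect_after (last_visit v xs) xs"

lemma reflect_at_last_visit: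
  assumes "0 \<le> v" "height xs \<le> v" "v \<le> height (take k xs)"
  shows "height (reflect_at_last_visit v xs) = 2 * v - height xs"
    and "\<And>j. j \<le> last_visit v xs \<Longrightarrow> take j (reflect_at_last_visit v xs) = take j xs"
    and "\<And>j. last_visit v xs < j \<Longrightarrow> j \<le> length xs \<Longrightarrow>
      v < height (take j (reflect_at_last_visit v xs))"
proof -
  note visit = last_visit[OF assms]
  show "height (reflect_at_last_visit v xs) = 2 * v - height xs"
    using height_take_reflect_after[of "last_visit v xs" "length xs" xs] visit(1,2)
    unfolding reflect_at_last_visit_def by simp
  show "\<And>j. j \<le> last_visit v xs \<Longrightarrow> take j (reflect_at_last_visit v xs) = take j xs"
    unfolding reflect_at_last_visit_def by (rule take_reflect_after)
  fix j
  assume j: "last_visit v xs < j" "j \<le> length xs"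
  then have "height (take j (reflect_at_last_visit v xs)) = 2 * v - height (take j xs)"
    using height_take_reflect_after[of "last_visit v xs" j xs] visit(2)
    unfolding reflect_at_last_visit_def by simp
  then show "v < height (take j (reflect_at_last_visit v xs))"
    using visit(3)[OF j] by simp
qed

lemma reflect_at_last_visit_inject:
  assumes "0 \<le> v"
    and xs: "height xs \<le> v" "v \<le> height (take k xs)"
    and ys: "height ys \<le> v" "v \<le> height (take l ys)"
    and eq: "reflect_at_last_visit v xs = reflect_at_last_visit v ys"
  shows "xs = ys"
proof -
  let ?t = "last_visit v xs" and ?s = "last_visit v ys"
  note visit_xs = last_visit[OF \<open>0 \<le> v\<close> xs] and visit_ys = last_visit[OF \<open>0 \<le> v\<close> ys]
  note refl_xs = reflect_at_last_visit[OF \<open>0 \<le> v\<close> xs]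
    and refl_ys = reflect_at_last_visit[OF \<open>0 \<le> v\<close> ys]
  have len: "length xs = length ys"
    using arg_cong[OF eq, of length] by (simp add: reflect_at_last_visit_def)
  have "?t = ?s"
  proof (rule ccontr)
    assume "?t \<noteq> ?s"
    then consider "?t < ?s" | "?s < ?t" by linarith
    then show False
    proof cases
      case 1
      then have "v < height (take ?s (reflect_at_last_visit v xs))"
        using refl_xs(3) visit_ys(1) len by simp
      then show False
        using eq refl_ys(2)[of ?s] visit_ys(2) by simp
    next
      case 2
      then have "v < height (take ?t (reflect_at_last_visit v ys))"
        using refl_ys(3) visit_xs(1) len by simp
      then show False
        using eq refl_xs(2)[of ?t] visit_xs(2) by simp
    qed
  qed
  have "take ?t xs = take ?t ys"
    using refl_xs(2)[of ?t] refl_ys(2)[of ?s] eq \<open>?t = ?s\<close> by simp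
  moreover have "map Not (drop ?t xs) = map Not (drop ?t ys)"
    using drop_reflect_after[OF visit_xs(1)] drop_reflect_after[OF visit_ys(1)] eq \<open>?t = ?s\<close>
    unfolding reflect_at_last_visit_def by simp
  then have "drop ?t xs = drop ?t ys"
    by (simp add: inj_def)
  ultimately show "xs = ys"
    by (metis append_take_drop_id)
qed

definition overshooting_ballot_seqs :: "nat \<Rightarrow> int \<Rightarrow> bool list set" where
  "overshooting_ballot_seqs n T = {xs \<in> ballot_seqs n. \<exists>k. height xs + T \<le> height (take k xs)}"

text \<open>The reflected sequence stays strictly above the level height x + T after the reflection
  point, so it is again a ballot sequence, and the level can be read off its final height.\<close>

lemma card_overshooting_ballot_seqs_le:
  assumes T: "0 \<le> T"
  shows "card (overshooting_ballot_seqs (Suc m) T) \<le> card (ballot_seqs_ge (Suc m) (2 * T + 1))"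
proof -
  define r where "r x = reflect_at_last_visit (height x + T) x" for x
  have overshoot: "0 \<le> height x + T" "height x \<le> height x + T"
    "\<exists>k. height x + T \<le> height (take k x)" "x \<in> ballot_seqs (Suc m)"
    if "x \<in> overshooting_ballot_seqs (Suc m) T" for x
    using that height_ballot_seq[of x m] T by (auto simp: overshooting_ballot_seqs_def)
  have height_r: "height (r x) = height x + 2 * T"
    if "x \<in> overshooting_ballot_seqs (Suc m) T" for x
    using overshoot[OF that] reflect_at_last_visit(1) unfolding r_def by fastforce
  have "r x \<in> ballot_seqs_ge (Suc m) (2 * T + 1)"
    if x: "x \<in> overshooting_ballot_seqs (Suc m) T" for x
  proof -
    obtain k where k: "height x + T \<le> height (take k x)"
      using overshoot(3)[OF x] by blast
    note refl = reflect_at_last_visit[OF overshoot(1,2)[OF x] k]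
    have "0 < height (take j (r x))" if "1 \<le> j" "j \<le> Suc m" for j
    proof (cases "j \<le> last_visit (height x + T) x")
      case True
      then show ?thesis using refl(2) overshoot(4)[OF x] that unfolding r_def
        by (simp add: ballot_seqs_def)
    next
      case False
      then show ?thesis using refl(3)[of j] overshoot(1,4)[OF x] that unfolding r_def
        by (simp add: ballot_seqs_def)
    qed
    then show ?thesis
      using height_r[OF x] overshoot[OF x] height_ballot_seq[OF overshoot(4)[OF x]] T
      by (simp add: ballot_seqs_ge_def ballot_seqs_def r_def reflect_at_last_visit_def)
  qed
  moreover have "inj_on r (overshooting_ballot_seqs (Suc m) T)"
  proof (rule inj_onI)
    fix x y
    assume x: "x \<in> overshooting_ballot_seqs (Suc m) T"
      and y: "y \<in> overshooting_ballot_seqs (Suc m) T" and eq: "r x = r y"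
    have "height x = height y"
      using height_r[OF x] height_r[OF y] eq by simp
    then show "x = y"
      using reflect_at_last_visit_inject[of "height x + T" x _ y] overshoot[OF x] overshoot[OF y] eq
      unfolding r_def by auto
  qed
  ultimately show ?thesis
    by (intro card_inj_on_le finite_ballot_seqs_ge) auto
qed

lemma card_ballot_seqs_ge_le_tame:
  assumes "0 \<le> T"
  shows "card (ballot_seqs_ge (Suc m) T) \<le>
    card (tame_ballot_seqs (Suc m) T) + card (ballot_seqs_ge (Suc m) (2 * T + 1))"
proof -
  have "ballot_seqs_ge (Suc m) T \<subseteq> tame_ballot_seqs (Suc m) T \<union> overshooting_ballot_seqs (Suc m) T"
    by (auto simp: ballot_seqs_ge_def tame_ballot_seqs_def overshooting_ballot_seqs_def not_less)
  moreover have "finite (tame_ballot_seqs (Suc m) T \<union> overshooting_ballot_seqs (Suc m) T)"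
    by (rule finite_subset[OF _ finite_ballot_seqs[of "Suc m"]])
      (auto simp: ballot_seqs_ge_def tame_ballot_seqs_def overshooting_ballot_seqs_def)
  ultimately have "card (ballot_seqs_ge (Suc m) T) \<le>
      card (tame_ballot_seqs (Suc m) T \<union> overshooting_ballot_seqs (Suc m) T)"
    by (simp add: card_mono)
  also have "\<dots> \<le> card (tame_ballot_seqs (Suc m) T) + card (overshooting_ballot_seqs (Suc m) T)"
    by (rule card_Un_le)
  finally show ?thesis
    using card_overshooting_ballot_seqs_le[OF assms, of m] by linarith
qed

section \<open>Estimates for binomial coefficients\<close>

lemma binomial_odd_middle: "Suc k * ((2 * k + 1) choose k) = (2 * k + 1) * ((2 * k) choose k)"
proof -
  have "Suc k * (Suc (2 * k) choose Suc k) = Suc (2 * k) * ((2 * k) choose k)"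
    by (rule Suc_times_binomial)
  moreover have "(Suc (2 * k) choose Suc k) = (Suc (2 * k) choose k)"
    by (subst binomial_symmetric) auto
  ultimately show ?thesis by simp
qed

lemma binomial_even_middle_Suc: "(2 * k + 2) choose (k + 1) = 2 * ((2 * k + 1) choose k)"
proof -
  have "Suc k * (Suc (Suc (2 * k)) choose Suc k) = Suc (Suc (2 * k)) * (Suc (2 * k) choose k)"
    by (rule Suc_times_binomial)
  then have "Suc k * (Suc (Suc (2 * k)) choose Suc k) = Suc k * (2 * (Suc (2 * k) choose k))"
    by simp
  then have "(Suc (Suc (2 * k)) choose Suc k) = 2 * (Suc (2 * k) choose k)"
    by (simp only: mult_cancel1) simp
  moreover have "2 * k + 2 = Suc (Suc (2 * k))" "k + 1 = Suc k" "2 * k + 1 = Suc (2 * k)"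
    by simp_all
  ultimately show ?thesis by (simp only:)
qed

text \<open>The factor 3 k + 1 (the true order is pi k) is weak enough for the induction step to go
  through.\<close>

lemma central_binomial_sq_upper: "real ((2 * k) choose k) ^ 2 * (3 * k + 1) \<le> 16 ^ k"
proof (induction k)
  case (Suc k)
  define c where "c = real ((2 * k) choose k)"
  define d where "d = real ((2 * k + 1) choose k)"
  define K where "K = real k"
  have rel: "(K + 1) * d = (2 * K + 1) * c"
  proof -
    have "real (Suc k * ((2 * k + 1) choose k)) = real ((2 * k + 1) * ((2 * k) choose k))"
      using binomial_odd_middle[of k] by (simp only:)
    then show ?thesis unfolding c_def d_def K_def by (simp add: algebra_simps)
  qed
  have next_middle: "real ((2 * Suc k) choose Suc k) = 2 * d"
    using binomial_even_middle_Suc[of k] unfolding d_def by (simp add: algebra_simps)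
  have "4 * d^2 * (3 * K + 4) * (K + 1)^2 = 4 * ((K + 1) * d)^2 * (3 * K + 4)"
    by (simp add: algebra_simps power2_eq_square)
  also have "\<dots> = 16 * c^2 * (3 * K + 1) * (K + 1)^2 - 4 * K * c^2"
    unfolding rel by (simp add: algebra_simps power2_eq_square)
  also have "\<dots> \<le> 16 * c^2 * (3 * K + 1) * (K + 1)^2"
    unfolding K_def by simp
  finally have "4 * d^2 * (3 * K + 4) \<le> 16 * c^2 * (3 * K + 1)"
    unfolding K_def by (simp add: mult_le_cancel_right)
  also have "\<dots> \<le> 16 * 16 ^ k"
    using Suc.IH unfolding c_def K_def by (simp add: algebra_simps)
  finally have "(2 * d)^2 * (3 * K + 4) \<le> 16 ^ Suc k"
    by (simp add: power2_eq_square algebra_simps)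
  then show ?case
    unfolding next_middle K_def by (simp add: algebra_simps)
qed simp

lemma binomial_odd_middle_sq_lower: "16 ^ k \<le> (real k + 1) * real ((2 * k + 1) choose k) ^ 2"
proof (induction k)
  case (Suc k)
  define d where "d = real ((2 * k + 1) choose k)"
  define d' where "d' = real ((2 * Suc k + 1) choose Suc k)"
  define K where "K = real k"
  have rel: "(K + 2) * d' = (2 * K + 3) * (2 * d)"
  proof -
    define P where "P = (2 * Suc k + 1) choose Suc k"
    define Q where "Q = (2 * Suc k) choose Suc k"
    define D where "D = (2 * k + 1) choose k"
    have "Suc (Suc k) * P = (2 * Suc k + 1) * Q"
      using binomial_odd_middle[of "Suc k"] unfolding P_def Q_def by simp
    moreover have "Q = 2 * D"
      using binomial_even_middle_Suc[of k] unfolding Q_def D_def by simp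
    ultimately have "real (Suc (Suc k) * P) = real ((2 * Suc k + 1) * (2 * D))"
      by simp
    then have "(real k + 2) * real P = (2 * real k + 3) * (2 * real D)"
      unfolding of_nat_mult by (simp add: algebra_simps)
    then show ?thesis unfolding d'_def K_def d_def P_def D_def .
  qed
  have "(K + 2) * (16 * 16 ^ k) \<le> (K + 2) * (16 * ((K + 1) * d^2))"
    using Suc.IH unfolding d_def K_def by (intro mult_left_mono) auto
  also have "\<dots> \<le> ((K + 2) * d')^2"
  proof -
    have "((K + 2) * d')^2 - (K + 2) * (16 * ((K + 1) * d^2)) = 4 * d^2"
      unfolding rel by (simp add: algebra_simps power2_eq_square)
    then show ?thesis using zero_le_power2[of d] by linarith
  qed
  also have "\<dots> = (K + 2) * ((K + 2) * d'^2)"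
    by (simp add: power2_eq_square)
  finally have "16 * 16 ^ k \<le> (K + 2) * d'^2"
    by (rule mult_left_le_imp_le) (simp add: K_def)
  then show ?case
    unfolding d'_def K_def by (simp add: algebra_simps)
qed simp

lemma middle_binomial_sq_upper: "real (m choose (m div 2)) ^ 2 * (real m + 1) \<le> 4 ^ m"
proof (cases "even m")
  case True
  then obtain k where m: "m = 2 * k" by auto
  then have middle: "m div 2 = k" by simp
  have "real (m choose (m div 2)) ^ 2 * (real m + 1) \<le> real ((2 * k) choose k) ^ 2 * (3 * k + 1)"
    unfolding middle unfolding m by (intro mult_left_mono) auto
  also have "\<dots> \<le> 16 ^ k"
    by (rule central_binomial_sq_upper)
  finally show ?thesis
    unfolding m by (simp add: power_mult)
next
  case False
  then obtain k where m: "m = 2 * k + 1" using oddE by blast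
  then have middle: "m div 2 = k" by simp
  have "real (m choose (m div 2)) ^ 2 * (real m + 1) \<le>
      real ((2 * k + 1) choose k) ^ 2 * (3 * k + 4)"
    unfolding middle unfolding m by (intro mult_left_mono) auto
  also have "\<dots> = real ((2 * Suc k) choose Suc k) ^ 2 * (3 * Suc k + 1) / 4"
    using binomial_even_middle_Suc[of k] by (simp add: algebra_simps power2_eq_square)
  also have "\<dots> \<le> 16 ^ Suc k / 4"
    using central_binomial_sq_upper[of "Suc k"] by (intro divide_right_mono) auto
  finally show ?thesis
    unfolding m by (simp add: power_mult)
qed

lemma middle_binomial_sq_lower: "4 ^ m \<le> 2 * (real m + 1) * real (m choose (m div 2)) ^ 2"
proof (cases "even m")
  case True
  then obtain k where m: "m = 2 * k" by auto
  show ?thesis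
  proof (cases k)
    case (Suc j)
    define d where "d = real ((2 * j + 1) choose j)"
    have middle: "real (m choose (m div 2)) = 2 * d"
      unfolding m Suc d_def using binomial_even_middle_Suc[of j] by (simp add: algebra_simps)
    have "(4::real) ^ m = 16 * 16 ^ j"
      unfolding m Suc by (simp add: power_mult)
    also have "\<dots> \<le> 16 * ((real j + 1) * d^2)"
      using binomial_odd_middle_sq_lower[of j] unfolding d_def by simp
    also have "\<dots> \<le> 2 * (real m + 1) * (2 * d)^2"
    proof -
      have "2 * (real m + 1) * (2 * d)^2 - 16 * ((real j + 1) * d^2) = 8 * d^2"
        unfolding m Suc by (simp add: algebra_simps power2_eq_square)
      then show ?thesis using zero_le_power2[of d] by linarith
    qed
    finally show ?thesis
      unfolding middle .
  qed (simp add: m)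
next
  case False
  then obtain k where m: "m = 2 * k + 1" using oddE by blast
  then have middle: "m div 2 = k" by simp
  have "(4::real) ^ m = 4 * 16 ^ k"
    unfolding m by (simp add: power_mult)
  also have "\<dots> \<le> 4 * ((real k + 1) * real ((2 * k + 1) choose k) ^ 2)"
    using binomial_odd_middle_sq_lower[of k] by simp
  also have "\<dots> = 2 * (real m + 1) * real (m choose (m div 2)) ^ 2"
    unfolding middle unfolding m by (simp add: algebra_simps)
  finally show ?thesis .
qed

lemma binomial_Suc_minus_binomial:
  assumes "Suc u \<le> m"
  shows "real (m choose Suc u) - real (m choose u) =
    real (m choose Suc u) * (real m - 2 * real u - 1) / (real m - real u)"
proof -
  have "(m choose Suc u) * Suc u = (m choose u) * (m - u)"
    by (metis binomial_absorb_comp binomial_absorption mult.commute)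
  then have "real ((m choose Suc u) * Suc u) = real ((m choose u) * (m - u))"
    by (simp only:)
  then have "real (m choose Suc u) * (real u + 1) = real (m choose u) * (real m - real u)"
    using assms by (simp add: of_nat_diff algebra_simps)
  moreover have "0 < real m - real u" using assms by simp
  ultimately show ?thesis by (simp add: field_simps)
qed

lemma binomial_Suc_minus_binomial_le:
  assumes "2 * Suc u \<le> m"
  shows "real (m choose Suc u) - real (m choose u) \<le>
    real (m choose (m div 2)) * (2 * (real m - 2 * real u - 1) / real m)"
proof -
  have "real (2 * Suc u) \<le> real m"
    using assms by (simp only: of_nat_le_iff)
  then have pos: "0 \<le> real m - 2 * real u - 1" "real m / 2 \<le> real m - real u"
    by simp_all
  have "(real m - 2 * real u - 1) / (real m - real u) \<le> (real m - 2 * real u - 1) / (real m / 2)"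
    using pos assms by (intro divide_left_mono) auto
  also have "\<dots> = 2 * (real m - 2 * real u - 1) / real m"
    by simp
  finally have ratio: "(real m - 2 * real u - 1) / (real m - real u) \<le> \<dots>" .
  have "real (m choose Suc u) \<le> real (m choose (m div 2))"
    using binomial_maximum by simp
  then have "real (m choose Suc u) * ((real m - 2 * real u - 1) / (real m - real u)) \<le>
      real (m choose (m div 2)) * (2 * (real m - 2 * real u - 1) / real m)"
    by (rule mult_mono[OF _ ratio]) (use pos in auto)
  moreover have "Suc u \<le> m"
    using assms by simp
  ultimately show ?thesis
    by (simp only: binomial_Suc_minus_binomial times_divide_eq_right)
qed

lemma binomial_Suc_minus_binomial_ge:
  assumes "2 * Suc u \<le> m"
  shows "real (m choose Suc u) * ((real m - 2 * real u - 1) / real m) \<le>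
    real (m choose Suc u) - real (m choose u)"
proof -
  have "(real m - 2 * real u - 1) / real m \<le> (real m - 2 * real u - 1) / (real m - real u)"
    using assms by (intro divide_left_mono) auto
  then have "real (m choose Suc u) * ((real m - 2 * real u - 1) / real m) \<le>
      real (m choose Suc u) * ((real m - 2 * real u - 1) / (real m - real u))"
    by (rule mult_left_mono) simp
  then show ?thesis
    using binomial_Suc_minus_binomial[of u m] assms by simp
qed

lemma binomial_near_middle:
  assumes m: "16 * T^2 \<le> m" and t: "m + 1 \<le> 2 * t + 2 * T" "2 * t \<le> m"
  shows "3 / 4 * real (m choose (m div 2)) \<le> real (m choose t)"
proof -
  let ?f = "\<lambda>u. real (m choose u)"
  let ?M = "?f (m div 2)"
  have "1 \<le> T" using t by (cases T) auto
  then have "1 \<le> T^2" by simp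
  then have m_pos: "0 < real m" using m by simp
  have mT: "16 * real T ^ 2 \<le> real m"
    using m by (metis of_nat_le_iff of_nat_mult of_nat_numeral of_nat_power)
  have "real (m + 1) \<le> real (2 * t + 2 * T)"
    using t(1) by (simp only: of_nat_le_iff)
  then have tT: "real m + 1 \<le> 2 * real t + 2 * real T"
    by simp
  have "?M - ?f t = (\<Sum>u\<in>{t..<m div 2}. ?f (Suc u) - ?f u)"
    using sum_Suc_diff'[of t "m div 2" ?f] t(2) by simp
  also have "\<dots> \<le> (\<Sum>u\<in>{t..<m div 2}. ?M * (4 * real T / real m))"
  proof (rule sum_mono)
    fix u
    assume u: "u \<in> {t..<m div 2}"
    then have u_le: "2 * Suc u \<le> m" by auto
    have "2 * (real m - 2 * real u - 1) \<le> 4 * real T"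
      using tT u by auto
    have "?f (Suc u) - ?f u \<le> ?M * (2 * (real m - 2 * real u - 1) / real m)"
      using u_le by (rule binomial_Suc_minus_binomial_le)
    also have "\<dots> \<le> ?M * (4 * real T / real m)"
      using \<open>2 * (real m - 2 * real u - 1) \<le> 4 * real T\<close> m_pos
      by (intro mult_left_mono divide_right_mono) auto
    finally show "?f (Suc u) - ?f u \<le> ?M * (4 * real T / real m)" .
  qed
  also have "\<dots> = real (m div 2 - t) * (?M * (4 * real T / real m))"
    by simp
  also have "\<dots> \<le> real T * (?M * (4 * real T / real m))"
    using t by (intro mult_right_mono) auto
  also have "\<dots> = ?M * (16 * real T ^ 2) / (4 * real m)"
    by (simp add: power2_eq_square)
  also have "\<dots> \<le> ?M * real m / (4 * real m)"
    using mT m_pos by (intro divide_right_mono mult_left_mono) auto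
  also have "\<dots> = ?M / 4"
    using m_pos by simp
  finally show ?thesis by simp
qed

lemma binomial_gap_near_middle:
  assumes T: "1 \<le> T" "16 * T^2 \<le> m" "m \<le> 64 * T^2"
  shows "real (m choose (m div 2)) / 200 \<le>
    real (m choose ((m + 1 - T) div 2)) - real (m choose ((m - 2 * T) div 2))"
proof -
  let ?f = "\<lambda>u. real (m choose u)"
  let ?M = "?f (m div 2)"
  define i1 where "i1 = (m + 1 - T) div 2"
  define i2 where "i2 = (m - 2 * T) div 2"
  have "T \<le> T^2" using T(1) by (simp add: power2_eq_square)
  then have "2 * T \<le> m" using T(2) by linarith
  then have i: "2 * i1 + T \<le> m + 1" "m \<le> 2 * i1 + T" "2 * i2 + 2 * T \<le> m" "m \<le> 2 * i2 + 2 * T + 1"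
    unfolding i1_def i2_def by presburger+
  have m_pos: "0 < real m" using \<open>2 * T \<le> m\<close> T(1) by simp
  let ?step = "3 / 4 * ?M * (real T / real m)"
  have "real (i1 - i2) * ?step = (\<Sum>u\<in>{i2..<i1}. ?step)"
    by simp
  also have "\<dots> \<le> (\<Sum>u\<in>{i2..<i1}. ?f (Suc u) - ?f u)"
  proof (rule sum_mono)
    fix u
    assume u: "u \<in> {i2..<i1}"
    then have "u < i1" by simp
    then have u_le: "2 * Suc u \<le> m"
      using i(1) T(1) by presburger
    have "T + 2 * Suc u \<le> m + 1"
      using \<open>u < i1\<close> i(1) by presburger
    then have "real (T + 2 * Suc u) \<le> real (m + 1)"
      by (simp only: of_nat_le_iff)
    then have "real T \<le> real m - 2 * real u - 1"
      by simp
    then have "real T / real m \<le> (real m - 2 * real u - 1) / real m"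
      using m_pos by (simp add: divide_right_mono)
    moreover have "3 / 4 * ?M \<le> ?f (Suc u)"
      using u u_le i(4) by (intro binomial_near_middle[OF T(2)]) auto
    ultimately have "?step \<le> ?f (Suc u) * ((real m - 2 * real u - 1) / real m)"
      by (intro mult_mono) auto
    then show "?step \<le> ?f (Suc u) - ?f u"
      using binomial_Suc_minus_binomial_ge[OF u_le] by linarith
  qed
  also have "\<dots> = ?f i1 - ?f i2"
    using sum_Suc_diff'[of i2 i1 ?f] i by simp
  finally have gap: "real (i1 - i2) * ?step \<le> ?f i1 - ?f i2" .
  have "real T / 2 \<le> real (i1 - i2)"
    using i by linarith
  then have "real T / 2 * ?step \<le> real (i1 - i2) * ?step"
    by (rule mult_right_mono) simp
  moreover have "?M / 200 \<le> real T / 2 * ?step"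
  proof -
    have "real m \<le> 64 * real T ^ 2"
      using T(3) by (metis of_nat_le_iff of_nat_mult of_nat_numeral of_nat_power)
    then have "?M * (8 * real m) \<le> ?M * (600 * real T ^ 2)"
      by (intro mult_left_mono) auto
    then show ?thesis
      using m_pos by (simp add: field_simps power2_eq_square)
  qed
  ultimately show ?thesis
    using gap unfolding i1_def i2_def by linarith
qed

lemma exists_scale_sq:
  fixes m :: nat
  assumes "16 \<le> m"
  shows "\<exists>T. 1 \<le> T \<and> 16 * T^2 \<le> m \<and> m \<le> 64 * T^2"
proof -
  from assms have "\<exists>T. 1 \<le> T \<and> 16 * T^2 \<le> m \<and> m < 16 * (T + 1)^2"
  proof (induction m rule: dec_induct)
    case base
    show ?case by (rule exI[of _ 1]) (simp add: power2_eq_square)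
  next
    case (step m)
    then obtain T where T: "1 \<le> T" "16 * T^2 \<le> m" "m < 16 * (T + 1)^2" by auto
    show ?case
    proof (cases "Suc m < 16 * (T + 1)^2")
      case False
      then have "Suc m = 16 * (T + 1)^2" using T by linarith
      moreover have "(T + 1)^2 < (T + 2)^2" by (simp add: power_strict_mono)
      ultimately show ?thesis by (intro exI[of _ "T + 1"]) auto
    qed (use T in auto)
  qed
  then obtain T where T: "1 \<le> T" "16 * T^2 \<le> m" "m < 16 * (T + 1)^2" by auto
  have "(T + 1)^2 \<le> (2 * T)^2" using T(1) by (intro power_mono) auto
  then show ?thesis using T by (intro exI[of _ T]) (auto simp: power_mult_distrib)
qed

lemma card_ballot_seqs_sq_upper:
  "real (card (ballot_seqs (Suc m))) ^ 2 * real (Suc m) \<le> 4 ^ m"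
  using middle_binomial_sq_upper[of m] by (simp add: card_ballot_seqs add.commute)

lemma B_upper:
  assumes n: "2 \<le> n"
  shows "real (B n) \<le> 2 ^ n / real n"
proof -
  define a where "a = n div 2"
  define b where "b = n - a"
  have "0 < a" "0 < b"
    using n unfolding a_def b_def by auto
  then obtain ma mb where a: "a = Suc ma" and b: "b = Suc mb"
    using gr0_implies_Suc by blast
  define X where "X = real (card (ballot_seqs a))"
  define Y where "Y = real (card (ballot_seqs b))"
  have "B n \<le> card (ballot_seqs a) * card (ballot_seqs b)"
    using B_le_card_ballot_seqs_mult[of a b] unfolding a_def b_def by simp
  then have BXY: "real (B n) \<le> X * Y"
    unfolding X_def Y_def by (metis of_nat_le_iff of_nat_mult)
  have "real n ^ 2 \<le> 16 * (real a * real b)"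
  proof -
    have "(real n - 1) * real n \<le> (2 * real a) * (2 * real b)"
      unfolding a_def b_def using n by (intro mult_mono) linarith+
    then have "real n * real n - real n \<le> 4 * (real a * real b)"
      by (simp add: algebra_simps)
    moreover have "2 * real n \<le> real n * real n"
      using n by (intro mult_right_mono) auto
    ultimately show ?thesis
      unfolding power2_eq_square by linarith
  qed
  have "(real (B n) * real n) ^ 2 = real (B n) ^ 2 * real n ^ 2"
    by (simp add: power_mult_distrib)
  also have "\<dots> \<le> (X * Y) ^ 2 * (16 * (real a * real b))"
    using BXY \<open>real n ^ 2 \<le> 16 * (real a * real b)\<close> by (intro mult_mono power_mono) auto
  also have "\<dots> = 16 * ((X ^ 2 * real a) * (Y ^ 2 * real b))"
    by (simp add: power_mult_distrib algebra_simps)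
  also have "\<dots> \<le> 16 * (4 ^ ma * 4 ^ mb)"
    using card_ballot_seqs_sq_upper[of ma] card_ballot_seqs_sq_upper[of mb]
    unfolding X_def Y_def a b by (intro mult_left_mono mult_mono) auto
  also have "\<dots> = (2 ^ n) ^ 2"
  proof -
    have "n = Suc (Suc (ma + mb))" using a b unfolding a_def b_def by simp
    then have "16 * (4 ^ ma * 4 ^ mb) = (4::real) ^ n"
      by (simp add: power_add)
    also have "\<dots> = (2 ^ n) ^ 2"
      by (simp add: power2_eq_square flip: power_mult_distrib)
    finally show ?thesis .
  qed
  finally have "real (B n) * real n \<le> 2 ^ n"
    by (rule power2_le_imp_le) simp
  then show ?thesis using n by (simp add: field_simps)
qed

lemma card_tame_ballot_seqs_lower:
  assumes "16 \<le> m"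
  shows "\<exists>T. real (m choose (m div 2)) / 200 \<le> real (card (tame_ballot_seqs (Suc m) T))"
proof -
  obtain T where T: "1 \<le> T" "16 * T^2 \<le> m" "m \<le> 64 * T^2"
    using exists_scale_sq[OF assms] by auto
  have "T \<le> T^2" using T(1) by (simp add: power2_eq_square)
  then have "2 * T + 1 \<le> m + 1" using T(2) by linarith
  have "int (2 * T + 1) = 2 * int T + 1"
    by simp
  note card_ballot_seqs_ge[of "2 * T + 1" m, unfolded this]
  then have "card (ballot_seqs_ge (Suc m) (2 * int T + 1)) = m choose ((m - 2 * T) div 2)"
    using \<open>2 * T + 1 \<le> m + 1\<close> by simp
  moreover have "card (ballot_seqs_ge (Suc m) (int T)) = m choose ((m + 1 - T) div 2)"
    using card_ballot_seqs_ge[of T m] T(1) \<open>2 * T + 1 \<le> m + 1\<close> by simp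
  ultimately have "m choose ((m + 1 - T) div 2) \<le>
      card (tame_ballot_seqs (Suc m) (int T)) + (m choose ((m - 2 * T) div 2))"
    using card_ballot_seqs_ge_le_tame[of "int T" m] by simp
  then have "real (m choose ((m + 1 - T) div 2)) \<le>
      real (card (tame_ballot_seqs (Suc m) (int T))) + real (m choose ((m - 2 * T) div 2))"
    by (simp only: of_nat_add[symmetric] of_nat_le_iff)
  then show ?thesis
    using binomial_gap_near_middle[OF T] by (intro exI[of _ "int T"]) linarith
qed

lemma B_lower:
  assumes n: "34 \<le> n"
  shows "2 ^ n \<le> 320000 * real n * real (B n)"
proof -
  define m where "m = n div 2 - 1"
  have a: "n div 2 = Suc m" and "16 \<le> m"
    unfolding m_def using n by simp_all
  define M where "M = real (m choose (m div 2))"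
  obtain T where MG: "M / 200 \<le> real (card (tame_ballot_seqs (Suc m) T))"
    using card_tame_ballot_seqs_lower[OF \<open>16 \<le> m\<close>] unfolding M_def by blast
  have "Suc m + Suc m \<le> n"
    using a by presburger
  then have "card (tame_ballot_seqs (Suc m) T) ^ 2 \<le> B n"
    using card_tame_ballot_seqs_squared[of "Suc m" T] B_mono by (blast intro: order_trans)
  then have "real (card (tame_ballot_seqs (Suc m) T)) ^ 2 \<le> real (B n)"
    by (simp only: of_nat_power[symmetric] of_nat_le_iff)
  moreover have "(M / 200) ^ 2 \<le> real (card (tame_ballot_seqs (Suc m) T)) ^ 2"
    using MG by (intro power_mono) (simp_all add: M_def)
  ultimately have "(M / 200) ^ 2 \<le> real (B n)"
    by linarith
  then have MB: "M ^ 2 \<le> 40000 * real (B n)"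
    by (simp add: power_divide)
  have "(2::real) ^ n \<le> 2 ^ (2 * m + 3)"
    using n unfolding m_def by (intro power_increasing) auto
  also have "\<dots> = 8 * 4 ^ m"
    by (simp add: power_add power_mult)
  also have "\<dots> \<le> 8 * (2 * (real m + 1) * M ^ 2)"
    using middle_binomial_sq_lower[of m] unfolding M_def by simp
  also have "\<dots> \<le> 8 * (real n * (40000 * real (B n)))"
  proof -
    have "real (Suc m + Suc m) \<le> real n"
      using \<open>Suc m + Suc m \<le> n\<close> by (simp only: of_nat_le_iff)
    then have "2 * (real m + 1) \<le> real n"
      by simp
    then show ?thesis using MB by (intro mult_left_mono mult_mono) auto
  qed
  finally show ?thesis by simp
qed

theorem proposition4:
  shows "\<exists>c C :: real. c > 0 \<and> C > 0 \<and>
    (\<exists>N. \<forall>n\<ge>N. c * (2 ^ n / real n) \<le> real (B n) \<and> real (B n) \<le> C * (2 ^ n / real n))"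
proof (intro exI conjI allI impI)
  fix n :: nat
  assume n: "34 \<le> n"
  then show "1 / 320000 * (2 ^ n / real n) \<le> real (B n)"
    using B_lower[OF n] by (simp add: field_simps)
  show "real (B n) \<le> 1 * (2 ^ n / real n)"
    using B_upper n by simp
qed simp_all

end
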